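(* Let $A$ be a finite alphabet and let $L$ be a circular language over $A$ (a set of circular words). The following conditions are equivalent: (1) There exists a $(1,3)$-complete circular splicing system $S=(A,I,R)$, with $I$ a finite set of nonempty circular words, such that $L=L(S)$. (2) There exists a flat splicing system $\mathcal{S}=(A,Y,R')$, where $Y\subseteq A^+$ is a finite language closed under the conjugacy relation and $R'=\{\langle a\mid 1 - 1\mid b\rangle : a,b\in A\}$, such that $L(\mathcal{S})=Lin(L)$. (3) There exists a finite language $Y\subseteq A^+$, closed under the conjugacy relation, such that $Lin(L)=Y^{\leftarrow_*}\setminus\{1\}$.
   Context: $1$ denotes the empty word, $A^+=A^*\setminus\{1\}$. Conjugacy: $xy\sim yx$ for $x,y\in A^*$; a circular word $\sim w$ is the conjugacy class of $w$; for a set $L$ of circular words, $Lin(L)=\{w\in A^*:\ \sim w\in L\}$ (full linearization); for $Y\subseteq A^*$, $\sim Y=\{\sim w: w\in Y\}$. A $(1,3)$-complete system $S=(A,I,R)$: $I$ is a finite set of circular words and the set of rules is $R=\{a\#1\$b\#1 : a,b\in A\}$ (all pairs of letters). Circular splicing with rule $a\#1\$b\#1$: from circular words $\sim xa$ and $\sim yb$ (for some words $x,y$) it produces $\sim xayb$. $L(S)$ is the smallest set of circular words containing $I$ and closed under applying rules of $R$ to any two (not necessarily distinct) of its elements. Flat splicing system $\mathcal{S}=(A,Y,R')$: $Y\subseteq A^*$, $R'$ a finite set of rules $\langle\alpha\mid\beta-\gamma\mid\delta\rangle$ with $\alpha,\beta,\gamma,\delta\in A^*$; applying such a rule to $u=x\alpha\beta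 y$ and $v=\gamma z\delta$ yields $x\alpha\gamma z\delta\beta y$. In particular $\langle a\mid 1-1\mid b\rangle$ applied to $u=xay$ and $v=zb$ yields $xazby$. $L(\mathcal{S})$ is the smallest language containing $Y$ and closed under applying rules of $R'$. Iterated insertion: for $Z,Y\subseteq A^*$, $Z\leftarrow Y=\{z_1yz_2: z_1z_2\in Z, y\in Y\}$; $Y^{\leftarrow_0}=\{1\}$, $Y^{\leftarrow_{i+1}}=Y^{\leftarrow_i}\leftarrow Y$, $Y^{\leftarrow_*}=\bigcup_{i\ge0}Y^{\leftarrow_i}$. *)

theory Defs
  imports Main
begin

(* Words over an alphabet A :: 'a set are lists xs with set xs \<subseteq> A, i.e. xs \<in> lists A.
   The empty word 1 is []. *)

definition conj_word :: "'a list \<Rightarrow> 'a list \<Rightarrow> bool" where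
  "conj_word x y \<longleftrightarrow> (\<exists>u v. x = u @ v \<and> y = v @ u)"

definition circ :: "'a list \<Rightarrow> 'a list set" where
  "circ w = {v. conj_word w v}"

definition Lin :: "'a list set set \<Rightarrow> 'a list set" where
  "Lin L = {w. circ w \<in> L}"

(* language of the (1,3)-complete circular splicing system (A, I, R),
   R = { a#1$b#1 : a,b \<in> A } *)
inductive_set csplice_lang :: "'a set \<Rightarrow> 'a list set set \<Rightarrow> 'a list set set"
  for A :: "'a set" and I :: "'a list set set" where
  init: "c \<in> I \<Longrightarrow> c \<in> csplice_lang A I"
| rule: "\<lbrakk> a \<in> A; b \<in> A; circ (x @ [a]) \<in> csplice_lang A I;
           circ (y @ [b]) \<in> csplice_lang A I \<rbrakk>
         \<Longrightarrow> circ (x @ [a] @ y @ [b]) \<in> csplice_lang A I"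

(* language of a flat splicing system (A, Y, R'); a rule <alpha|beta - gamma|delta>
   is encoded as the tuple (alpha, beta, gamma, delta) *)
inductive_set flat_lang ::
  "'a list set \<Rightarrow> ('a list \<times> 'a list \<times> 'a list \<times> 'a list) set \<Rightarrow> 'a list set"
  for Y :: "'a list set" and R :: "('a list \<times> 'a list \<times> 'a list \<times> 'a list) set" where
  init: "w \<in> Y \<Longrightarrow> w \<in> flat_lang Y R"
| rule: "\<lbrakk> (\<alpha>, \<beta>, \<gamma>, \<delta>) \<in> R; x @ \<alpha> @ \<beta> @ y \<in> flat_lang Y R;
           \<gamma> @ z @ \<delta> \<in> flat_lang Y R \<rbrakk>
         \<Longrightarrow> x @ \<alpha> @ \<gamma> @ z @ \<delta> @ \<beta> @ y \<in> flat_lang Y R"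

definition flat_rules :: "'a set \<Rightarrow> ('a list \<times> 'a list \<times> 'a list \<times> 'a list) set" where
  "flat_rules A = {([a], [], [], [b]) | a b. a \<in> A \<and> b \<in> A}"

definition conj_closed :: "'a list set \<Rightarrow> bool" where
  "conj_closed Y \<longleftrightarrow> (\<forall>w \<in> Y. \<forall>v. conj_word w v \<longrightarrow> v \<in> Y)"

definition insertion :: "'a list set \<Rightarrow> 'a list set \<Rightarrow> 'a list set" where
  "insertion Z Y = {z1 @ y @ z2 | z1 z2 y. z1 @ z2 \<in> Z \<and> y \<in> Y}"

fun ins_pow :: "'a list set \<Rightarrow> nat \<Rightarrow> 'a list set" where
  "ins_pow Y 0 = {[]}"
| "ins_pow Y (Suc n) = insertion (ins_pow Y n) Y"

definition ins_star :: "'a list set \<Rightarrow> 'a list set" where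
  "ins_star Y = (\<Union>n. ins_pow Y n)"

end

theory Submission
  imports Defs
begin

text \<open>All three conditions say that \<open>Lin L = concat_conj_closure Y\<close> for a finite
conjugacy-closed \<open>Y \<subseteq> A\<^sup>+\<close>, where \<open>concat_conj_closure Y\<close> is the least language containing
\<open>Y\<close> and closed under concatenation and conjugation. On linear representatives a circular splicing
step \<open>\<sim>xa, \<sim>yb \<mapsto> \<sim>xayb\<close> is a concatenation. A flat rule \<open>\<langle>a | 1 - 1 | b\<rangle>\<close> inserts one
nonempty word into another, i.e. concatenates and conjugates; conversely concatenation and
one-letter rotation are instances of it. Iterated insertion of \<open>Y\<close> lies between the flat
language and \<open>concat_conj_closure Y\<close>, since both are closed under insertion.\<close>

lemma conj_word_iff_rotate: "conj_word x y \<longleftrightarrow> (\<exists>n. y = rotate n x)"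
proof
  assume "conj_word x y"
  then obtain u v where "x = u @ v" "y = v @ u" unfolding conj_word_def by blast
  then show "\<exists>n. y = rotate n x" by (metis rotate_append)
next
  assume "\<exists>n. y = rotate n x"
  then show "conj_word x y" unfolding conj_word_def
    by (metis append_take_drop_id rotate_drop_take)
qed

lemma conj_word_refl: "conj_word x x"
  unfolding conj_word_def by (rule exI[of _ "[]"]) simp

lemma conj_word_sym: "conj_word x y \<Longrightarrow> conj_word y x"
  unfolding conj_word_def by blast

lemma conj_word_trans: "conj_word x y \<Longrightarrow> conj_word y z \<Longrightarrow> conj_word x z"
  unfolding conj_word_iff_rotate by (metis rotate_rotate)

lemma conj_word_rotate1: "conj_word w (rotate1 w)"
  unfolding conj_word_iff_rotate by (metis rotate_Suc rotate0 id_apply)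

lemma conj_word_set_length: "conj_word u v \<Longrightarrow> set v = set u \<and> length v = length u"
  unfolding conj_word_def by auto

lemma nonempty_word_snoc:
  assumes "w \<in> lists A - {[]}"
  obtains u a where "w = u @ [a]" "a \<in> A"
  using assms by (metis Diff_iff append_butlast_last_id in_listsD last_in_set singletonI)

lemma circ_eq_iff: "circ u = circ v \<longleftrightarrow> conj_word u v"
  unfolding circ_def by (auto intro: conj_word_refl conj_word_sym conj_word_trans)

lemma mem_circ_self: "w \<in> circ w"
  unfolding circ_def by (simp add: conj_word_refl)

lemma finite_circ: "finite (circ w)"
proof (rule finite_subset)
  show "circ w \<subseteq> {xs. set xs \<subseteq> set w \<and> length xs = length w}"
    unfolding circ_def using conj_word_set_length by fastforce
qed (rule finite_lists_length_eq[OF finite_set])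

lemma conj_closed_Lin: "conj_closed (Lin L)"
  unfolding conj_closed_def Lin_def
  by (auto dest: conj_word_sym simp flip: circ_eq_iff)

lemma conj_closed_nonempty_words: "conj_closed (lists A - {[]})"
  unfolding conj_closed_def using conj_word_set_length
  by (fastforce simp: in_lists_conv_set)

lemma Lin_image_circ: "conj_closed M \<Longrightarrow> Lin (circ ` M) = M"
  unfolding conj_closed_def Lin_def by (auto simp: circ_eq_iff) (meson conj_word_sym)

lemma circ_mem_image_circ_iff: "conj_closed M \<Longrightarrow> circ w \<in> circ ` M \<longleftrightarrow> w \<in> M"
  using Lin_image_circ[of M] unfolding Lin_def by blast

lemma image_circ_Lin: "L \<subseteq> range circ \<Longrightarrow> circ ` Lin L = L"
  unfolding Lin_def by auto

lemma Lin_eq_Union: "L \<subseteq> range circ \<Longrightarrow> Lin L = \<Union> L"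
proof -
  assume L: "L \<subseteq> range circ"
  have "circ w = c" if w: "w \<in> c" and c: "c \<in> L" for w c
  proof -
    obtain u where "c = circ u" using L c by blast
    with w have "conj_word u w" unfolding circ_def by simp
    with \<open>c = circ u\<close> show ?thesis by (simp add: circ_eq_iff conj_word_sym)
  qed
  then show ?thesis unfolding Lin_def using mem_circ_self by blast
qed

lemma finite_Lin: "finite L \<Longrightarrow> L \<subseteq> range circ \<Longrightarrow> finite (Lin L)"
  using finite_circ by (auto simp: Lin_eq_Union)

lemma Lin_mono: "L \<subseteq> L' \<Longrightarrow> Lin L \<subseteq> Lin L'"
  unfolding Lin_def by auto

inductive_set concat_conj_closure :: "'a list set \<Rightarrow> 'a list set" for Y where
  base: "w \<in> Y \<Longrightarrow> w \<in> concat_conj_closure Y"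
| append: "u \<in> concat_conj_closure Y \<Longrightarrow> v \<in> concat_conj_closure Y
    \<Longrightarrow> u @ v \<in> concat_conj_closure Y"
| swap: "u @ v \<in> concat_conj_closure Y \<Longrightarrow> v @ u \<in> concat_conj_closure Y"

lemma conj_closed_concat_conj_closure: "conj_closed (concat_conj_closure Y)"
  unfolding conj_closed_def conj_word_def by (auto intro: concat_conj_closure.swap)

lemma concat_conj_closure_insert:
  assumes "p @ q \<in> concat_conj_closure Y" "v \<in> concat_conj_closure Y"
  shows "p @ v @ q \<in> concat_conj_closure Y"
proof -
  have "q @ p \<in> concat_conj_closure Y" using assms(1) by (rule concat_conj_closure.swap)
  with assms(2) have "(v @ q) @ p \<in> concat_conj_closure Y"
    by (metis append.assoc concat_conj_closure.append)
  then show ?thesis by (metis append.assoc concat_conj_closure.swap)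
qed

lemma concat_conj_closure_least:
  assumes "Y \<subseteq> M" "\<And>u v. u \<in> M \<Longrightarrow> v \<in> M \<Longrightarrow> u @ v \<in> M"
    and "\<And>u v. u @ v \<in> M \<Longrightarrow> v @ u \<in> M"
  shows "concat_conj_closure Y \<subseteq> M"
proof
  show "w \<in> M" if "w \<in> concat_conj_closure Y" for w
    using that by induction (use assms in blast)+
qed

lemma concat_conj_closure_nonempty_words:
  "Y \<subseteq> lists A - {[]} \<Longrightarrow> concat_conj_closure Y \<subseteq> lists A - {[]}"
  by (rule concat_conj_closure_least) auto

lemma flat_rules_iff: "(\<alpha>, \<beta>, \<gamma>, \<delta>) \<in> flat_rules A \<longleftrightarrow>
    (\<exists>a b. \<alpha> = [a] \<and> \<beta> = [] \<and> \<gamma> = [] \<and> \<delta> = [b] \<and> a \<in> A \<and> b \<in> A)"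
  unfolding flat_rules_def by auto

lemma flat_lang_subset_if_insertion_closed:
  assumes "Y \<subseteq> M" "\<And>p q v. p @ q \<in> M \<Longrightarrow> v \<in> M \<Longrightarrow> p @ v @ q \<in> M"
  shows "flat_lang Y (flat_rules A) \<subseteq> M"
proof
  show "w \<in> M" if "w \<in> flat_lang Y (flat_rules A)" for w
    using that
  proof induction
    case (rule \<alpha> \<beta> \<gamma> \<delta> x y z)
    then show ?case using assms(2)[of "x @ \<alpha>" y "z @ \<delta>"] by (auto simp: flat_rules_iff)
  qed (use assms(1) in blast)
qed

lemma flat_lang_nonempty_words:
  "Y \<subseteq> lists A - {[]} \<Longrightarrow> flat_lang Y (flat_rules A) \<subseteq> lists A - {[]}"
  by (rule flat_lang_subset_if_insertion_closed) auto

lemma flat_lang_append: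
  assumes Y: "Y \<subseteq> lists A - {[]}"
    and u: "u \<in> flat_lang Y (flat_rules A)" and v: "v \<in> flat_lang Y (flat_rules A)"
  shows "u @ v \<in> flat_lang Y (flat_rules A)"
proof -
  have "u \<in> lists A - {[]}" "v \<in> lists A - {[]}"
    using u v flat_lang_nonempty_words[OF Y] by blast+
  then obtain u' a v' b where
    uv: "u = u' @ [a]" "v = v' @ [b]" and ab: "([a], [], [], [b]) \<in> flat_rules A"
    by (metis nonempty_word_snoc flat_rules_iff)
  have "u' @ [a] @ [] @ v' @ [b] @ [] @ [] \<in> flat_lang Y (flat_rules A)"
    by (rule flat_lang.rule[OF ab]) (use u v uv in simp_all)
  then show ?thesis using uv by simp
qed

lemma flat_lang_rotate1:
  assumes Y: "Y \<subseteq> lists A - {[]}" "conj_closed Y"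
    and "w \<in> flat_lang Y (flat_rules A)"
  shows "rotate1 w \<in> flat_lang Y (flat_rules A)"
  using assms(3)
proof induction
  case (init w)
  then show ?case
    using Y(2) conj_word_rotate1 unfolding conj_closed_def by (blast intro: flat_lang.init)
next
  case (rule \<alpha> \<beta> \<gamma> \<delta> x y z)
  then obtain a b where r: "\<alpha> = [a]" "\<beta> = []" "\<gamma> = []" "\<delta> = [b]"
    by (auto simp: flat_rules_iff)
  show ?case
  proof (cases x)
    case Nil
    with rule r have "y @ [a] \<in> flat_lang Y (flat_rules A)" by simp
    from flat_lang_append[OF Y(1) rule(3) this] show ?thesis using r Nil by simp
  next
    case (Cons c x')
    with rule r have "x' @ [a] @ [] @ (y @ [c]) \<in> flat_lang Y (flat_rules A)" by simp
    from flat_lang.rule[of "[a]" "[]" "[]" "[b]", OF _ this] rule(1,3) r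
    have "x' @ [a] @ [] @ z @ [b] @ [] @ y @ [c] \<in> flat_lang Y (flat_rules A)" by simp
    then show ?thesis using r Cons by simp
  qed
qed

lemma flat_lang_eq_concat_conj_closure:
  assumes Y: "Y \<subseteq> lists A - {[]}" "conj_closed Y"
  shows "flat_lang Y (flat_rules A) = concat_conj_closure Y"
proof
  show "flat_lang Y (flat_rules A) \<subseteq> concat_conj_closure Y"
    by (rule flat_lang_subset_if_insertion_closed)
       (auto intro: concat_conj_closure.base concat_conj_closure_insert)
  have rotate: "rotate n w \<in> flat_lang Y (flat_rules A)"
    if "w \<in> flat_lang Y (flat_rules A)" for n w
    using that by (induction n) (simp_all add: flat_lang_rotate1[OF Y])
  show "concat_conj_closure Y \<subseteq> flat_lang Y (flat_rules A)"
  proof (rule concat_conj_closure_least)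
    show "v @ u \<in> flat_lang Y (flat_rules A)" if "u @ v \<in> flat_lang Y (flat_rules A)" for u v
      using rotate[OF that, of "length u"] by (simp add: rotate_append)
  qed (simp_all add: subsetI flat_lang.init flat_lang_append[OF Y(1)])
qed

lemma insertion_iff:
  "w \<in> insertion Z Y \<longleftrightarrow> (\<exists>z1 z2 y. w = z1 @ y @ z2 \<and> z1 @ z2 \<in> Z \<and> y \<in> Y)"
  unfolding insertion_def by blast

lemma ins_pow_insert:
  "v \<in> ins_pow Y m \<Longrightarrow> p @ q \<in> ins_pow Y n \<Longrightarrow> p @ v @ q \<in> ins_pow Y (n + m)"
proof (induction m arbitrary: v p q)
  case (Suc m)
  then obtain v1 v2 y where v: "v = v1 @ y @ v2" "v1 @ v2 \<in> ins_pow Y m" "y \<in> Y"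
    by (auto simp: insertion_iff)
  have "(p @ v1) @ (v2 @ q) \<in> ins_pow Y (n + m)" using Suc.IH[OF v(2) Suc.prems(2)] by simp
  with v(3) have "(p @ v1) @ y @ (v2 @ q) \<in> ins_pow Y (Suc (n + m))"
    unfolding ins_pow.simps insertion_iff by blast
  then show ?case using v by simp
qed simp

lemma ins_star_insert:
  assumes "p @ q \<in> ins_star Y" "v \<in> ins_star Y"
  shows "p @ v @ q \<in> ins_star Y"
proof -
  obtain n m where "p @ q \<in> ins_pow Y n" "v \<in> ins_pow Y m"
    using assms unfolding ins_star_def by blast
  then have "p @ v @ q \<in> ins_pow Y (n + m)" by (rule ins_pow_insert[rotated])
  then show ?thesis unfolding ins_star_def by blast
qed

lemma ins_pow_subset_concat_conj_closure: "ins_pow Y n - {[]} \<subseteq> concat_conj_closure Y"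
proof (induction n)
  case (Suc n)
  show ?case
  proof
    fix w assume "w \<in> ins_pow Y (Suc n) - {[]}"
    then obtain z1 z2 y where w: "w = z1 @ y @ z2" "z1 @ z2 \<in> ins_pow Y n" "y \<in> Y"
      by (auto simp: insertion_iff)
    show "w \<in> concat_conj_closure Y"
    proof (cases "z1 @ z2 = []")
      case False
      with Suc.IH w(2) have "z1 @ z2 \<in> concat_conj_closure Y" by blast
      then show ?thesis
        using w by (blast intro: concat_conj_closure_insert concat_conj_closure.base)
    qed (use w in \<open>auto intro: concat_conj_closure.base\<close>)
  qed
qed simp

lemma ins_star_eq_concat_conj_closure:
  assumes Y: "Y \<subseteq> lists A - {[]}" "conj_closed Y"
  shows "ins_star Y - {[]} = concat_conj_closure Y"
proof
  show "ins_star Y - {[]} \<subseteq> concat_conj_closure Y"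
    unfolding ins_star_def using ins_pow_subset_concat_conj_closure by blast
  have "Y \<subseteq> ins_star Y"
  proof
    fix y assume "y \<in> Y"
    then have "[] @ y @ [] \<in> ins_pow Y 1" by (auto simp: insertion_iff)
    then show "y \<in> ins_star Y" unfolding ins_star_def by (auto simp del: ins_pow.simps)
  qed
  then have "flat_lang Y (flat_rules A) \<subseteq> ins_star Y"
    by (rule flat_lang_subset_if_insertion_closed) (rule ins_star_insert)
  then show "concat_conj_closure Y \<subseteq> ins_star Y - {[]}"
    using flat_lang_eq_concat_conj_closure[OF Y] concat_conj_closure_nonempty_words[OF Y(1)]
    by blast
qed

lemma csplice_lang_image_circ:
  assumes Y: "Y \<subseteq> lists A - {[]}"
  shows "csplice_lang A (circ ` Y) = circ ` concat_conj_closure Y"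
proof
  show "csplice_lang A (circ ` Y) \<subseteq> circ ` concat_conj_closure Y"
  proof
    fix c assume "c \<in> csplice_lang A (circ ` Y)"
    then show "c \<in> circ ` concat_conj_closure Y"
    proof induction
      case (rule a b x y)
      from rule.IH have "(x @ [a]) @ (y @ [b]) \<in> concat_conj_closure Y"
        by (simp only: circ_mem_image_circ_iff conj_closed_concat_conj_closure
            concat_conj_closure.append)
      then show ?case by (metis append.assoc image_eqI)
    qed (auto intro: concat_conj_closure.base)
  qed
  have "circ w \<in> csplice_lang A (circ ` Y)" if "w \<in> concat_conj_closure Y" for w
    using that
  proof induction
    case (append u v)
    with concat_conj_closure_nonempty_words[OF Y] obtain u' a v' b
      where "u = u' @ [a]" "v = v' @ [b]" "a \<in> A" "b \<in> A"
      by (metis nonempty_word_snoc subsetD)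
    then show ?case using append.IH csplice_lang.rule[of a A b u' "circ ` Y" v'] by simp
  next
    case (swap u v)
    have "circ (v @ u) = circ (u @ v)" unfolding circ_eq_iff conj_word_def by blast
    then show ?case using swap.IH by simp
  qed (auto intro: csplice_lang.init)
  then show "circ ` concat_conj_closure Y \<subseteq> csplice_lang A (circ ` Y)" by blast
qed

lemma csplice_generated_iff:
  assumes "L \<subseteq> range circ"
  shows "(\<exists>I. finite I \<and> I \<subseteq> circ ` (lists A - {[]}) \<and> L = csplice_lang A I) \<longleftrightarrow>
    (\<exists>Y. finite Y \<and> Y \<subseteq> lists A - {[]} \<and> conj_closed Y \<and> Lin L = concat_conj_closure Y)"
proof
  assume "\<exists>I. finite I \<and> I \<subseteq> circ ` (lists A - {[]}) \<and> L = csplice_lang A I"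
  then obtain I where I: "finite I" "I \<subseteq> circ ` (lists A - {[]})" "L = csplice_lang A I"
    by blast
  have Y: "Lin I \<subseteq> lists A - {[]}"
    using Lin_mono[OF I(2)] Lin_image_circ[OF conj_closed_nonempty_words[of A]] by simp
  have "circ ` Lin I = I" by (rule image_circ_Lin) (use I(2) in blast)
  with I(3) have "L = csplice_lang A (circ ` Lin I)" by simp
  then have "Lin L = concat_conj_closure (Lin I)"
    by (simp add: csplice_lang_image_circ[OF Y] Lin_image_circ conj_closed_concat_conj_closure)
  moreover have "finite (Lin I)" using I(1,2) by (intro finite_Lin) auto
  ultimately show "\<exists>Y. finite Y \<and> Y \<subseteq> lists A - {[]} \<and> conj_closed Y \<and> Lin L = concat_conj_closure Y"
    using Y conj_closed_Lin by blast
next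
  assume "\<exists>Y. finite Y \<and> Y \<subseteq> lists A - {[]} \<and> conj_closed Y \<and> Lin L = concat_conj_closure Y"
  then obtain Y where Y: "finite Y" "Y \<subseteq> lists A - {[]}" "Lin L = concat_conj_closure Y"
    by blast
  have "L = csplice_lang A (circ ` Y)"
    using image_circ_Lin[OF assms] Y(3) csplice_lang_image_circ[OF Y(2)] by simp
  with Y(1,2) show "\<exists>I. finite I \<and> I \<subseteq> circ ` (lists A - {[]}) \<and> L = csplice_lang A I"
    by blast
qed

theorem theorem11p6:
  fixes A :: "'a set" and L :: "'a list set set"
  assumes "finite A"
    and "L \<subseteq> circ ` lists A"
  shows "((\<exists>I. finite I \<and> I \<subseteq> circ ` (lists A - {[]}) \<and> L = csplice_lang A I)
          \<longleftrightarrow> (\<exists>Y. finite Y \<and> Y \<subseteq> lists A - {[]} \<and> conj_closed Y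
                   \<and> flat_lang Y (flat_rules A) = Lin L))
       \<and> ((\<exists>Y. finite Y \<and> Y \<subseteq> lists A - {[]} \<and> conj_closed Y
                   \<and> flat_lang Y (flat_rules A) = Lin L)
          \<longleftrightarrow> (\<exists>Y. finite Y \<and> Y \<subseteq> lists A - {[]} \<and> conj_closed Y
                   \<and> Lin L = ins_star Y - {[]}))"
proof -
  have "L \<subseteq> range circ" using assms(2) by blast
  have eqs: "flat_lang Y (flat_rules A) = concat_conj_closure Y"
    "ins_star Y - {[]} = concat_conj_closure Y"
    if "Y \<subseteq> lists A - {[]}" "conj_closed Y" for Y
    using flat_lang_eq_concat_conj_closure[OF that] ins_star_eq_concat_conj_closure[OF that] .
  have "(\<exists>Y. finite Y \<and> Y \<subseteq> lists A - {[]} \<and> conj_closed Y \<and> flat_lang Y (flat_rules A) = Lin L)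
    \<longleftrightarrow> (\<exists>Y. finite Y \<and> Y \<subseteq> lists A - {[]} \<and> conj_closed Y \<and> Lin L = concat_conj_closure Y)"
    using eqs(1) by (metis (no_types, lifting))
  moreover have "(\<exists>Y. finite Y \<and> Y \<subseteq> lists A - {[]} \<and> conj_closed Y \<and> Lin L = ins_star Y - {[]})
    \<longleftrightarrow> (\<exists>Y. finite Y \<and> Y \<subseteq> lists A - {[]} \<and> conj_closed Y \<and> Lin L = concat_conj_closure Y)"
    using eqs(2) by (metis (no_types, lifting))
  ultimately show ?thesis using csplice_generated_iff[OF \<open>L \<subseteq> range circ\<close>, of A] by simp
qed

end
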